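(* Let $\Lambda_1$ be a $k_1$-graph and $\Lambda_2$ a $k_2$-graph, and let $\Lambda_1\times\Lambda_2$ be their cartesian product $(k_1+k_2)$-graph. Then: (a) $\Lambda_1\times\Lambda_2$ is a row-finite $(k_1+k_2)$-graph with no sources if and only if $\Lambda_i$ is a row-finite $k_i$-graph with no sources for $i=1,2$; (b) $\Lambda_1\times\Lambda_2$ is aperiodic if and only if $\Lambda_1$ and $\Lambda_2$ are aperiodic; (c) $\Lambda_1\times\Lambda_2$ is strongly aperiodic if and only if $\Lambda_1$ and $\Lambda_2$ are strongly aperiodic.
   Context: A $k$-graph is a countable category $\Lambda$ with a functor $d:\Lambda\to\mathbb{N}^k$ satisfying the factorization property: whenever $d(\lambda)=m+n$ there are unique $\mu,\nu$ with $\lambda=\mu\nu$, $d(\mu)=m$, $d(\nu)=n$. $\Lambda^n=d^{-1}(n)$, $\Lambda^0$ the vertices, $r,s$ range and source, $v\Lambda^n=\{\lambda:r(\lambda)=v,d(\lambda)=n\}$. Row-finite: each $v\Lambda^n$ finite; no sources: $v\Lambda^{e_i}\neq\emptyset$ for all $v$ and all standard generators $e_i$. The cartesian product of a $k_1$-graph $(\Lambda_1,d_1)$ and a $k_2$-graph $(\Lambda_2,d_2)$ is the product category $\Lambda_1\times\Lambda_2$ with degree $(d_1\times d_2)(\lambda_1,\lambda_2)=(d_1(\lambda_1),d_2(\lambda_2))\in\mathbb{N}^{k_1}\times\mathbb{N}^{k_2}=\mathbb{N}^{k_1+k_2}$. For $0\le m\le n\le d(\lambda)$, $\lambda(m,n)$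 is the unique path with $\lambda=\lambda'\lambda(m,n)\lambda''$, $d(\lambda')=m$, $d(\lambda(m,n))=n-m$. No local periodicity at $v$: for each $m\ne n\in\mathbb{N}^k$ there is $\lambda$ with $r(\lambda)=v$, $d(\lambda)\ge m\vee n$ and $\lambda(m,m+d(\lambda)-(m\vee n))\ne\lambda(n,n+d(\lambda)-(m\vee n))$ ($\vee$ coordinatewise max); aperiodic: no local periodicity at every vertex. $v\le w$ means some path has range $v$, source $w$; $H\subseteq\Lambda^0$ hereditary if $v\in H$, $v\le w$ imply $w\in H$; saturated if for every $v$: $r^{-1}(v)\ne\emptyset$ and $\{s(\lambda):\lambda\in v\Lambda^{e_i}\}\subseteq H$ for some $i$ imply $v\in H$. For saturated hereditary $H\subsetneq\Lambda^0$, $\Gamma(\Lambda\setminus H)$ is the $k$-graph with vertices $\Lambda^0\setminus H$ and morphisms $\{\lambda:s(\lambda)\notin H\}$. A row-finite $k$-graph with no sources is strongly aperiodic if $\Gamma(\Lambda\setminus H)$ is aperiodic for every saturated hereditary $H\subsetneq\Lambda^0$. *)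

theory Defs
  imports "HOL-Library.Countable_Set"
begin

text \<open>Degrees in N^k are functions nat => nat vanishing outside {..<k}.
Composition convention: cmp mu nu is the path mu nu, defined when
src mu = rng nu; then rng (mu nu) = rng mu and src (mu nu) = src nu.\<close>

record ('v, 'a) kgraph =
  Obj :: "'v set"
  Mor :: "'a set"
  rng :: "'a \<Rightarrow> 'v"
  src :: "'a \<Rightarrow> 'v"
  cmp :: "'a \<Rightarrow> 'a \<Rightarrow> 'a"
  idm :: "'v \<Rightarrow> 'a"
  deg :: "'a \<Rightarrow> nat \<Rightarrow> nat"

definition deg_space :: "nat \<Rightarrow> (nat \<Rightarrow> nat) set" where
  "deg_space k = {m. \<forall>i. k \<le> i \<longrightarrow> m i = 0}"

definition dadd :: "(nat \<Rightarrow> nat) \<Rightarrow> (nat \<Rightarrow> nat) \<Rightarrow> nat \<Rightarrow> nat" where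
  "dadd m n = (\<lambda>i. m i + n i)"

definition dsub :: "(nat \<Rightarrow> nat) \<Rightarrow> (nat \<Rightarrow> nat) \<Rightarrow> nat \<Rightarrow> nat" where
  "dsub m n = (\<lambda>i. m i - n i)"

definition djoin :: "(nat \<Rightarrow> nat) \<Rightarrow> (nat \<Rightarrow> nat) \<Rightarrow> nat \<Rightarrow> nat" where
  "djoin m n = (\<lambda>i. max (m i) (n i))"

definition dle :: "(nat \<Rightarrow> nat) \<Rightarrow> (nat \<Rightarrow> nat) \<Rightarrow> bool" where
  "dle m n = (\<forall>i. m i \<le> n i)"

definition unit_deg :: "nat \<Rightarrow> nat \<Rightarrow> nat" where
  "unit_deg i = (\<lambda>j. if j = i then 1 else 0)"

definition is_kgraph :: "nat \<Rightarrow> ('v, 'a, 'z) kgraph_scheme \<Rightarrow> bool" where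
  "is_kgraph k G \<longleftrightarrow>
     countable (Obj G) \<and> countable (Mor G) \<and>
     (\<forall>l\<in>Mor G. rng G l \<in> Obj G \<and> src G l \<in> Obj G) \<and>
     (\<forall>v\<in>Obj G. idm G v \<in> Mor G \<and> rng G (idm G v) = v \<and> src G (idm G v) = v) \<and>
     (\<forall>\<mu>\<in>Mor G. \<forall>\<nu>\<in>Mor G. src G \<mu> = rng G \<nu> \<longrightarrow>
        cmp G \<mu> \<nu> \<in> Mor G \<and> rng G (cmp G \<mu> \<nu>) = rng G \<mu> \<and> src G (cmp G \<mu> \<nu>) = src G \<nu>) \<and>
     (\<forall>l\<in>Mor G. cmp G (idm G (rng G l)) l = l \<and> cmp G l (idm G (src G l)) = l) \<and>
     (\<forall>\<alpha>\<in>Mor G. \<forall>\<mu>\<in>Mor G. \<forall>\<nu>\<in>Mor G. src G \<alpha> = rng G \<mu> \<longrightarrow> src G \<mu> = rng G \<nu> \<longrightarrow>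
        cmp G (cmp G \<alpha> \<mu>) \<nu> = cmp G \<alpha> (cmp G \<mu> \<nu>)) \<and>
     (\<forall>l\<in>Mor G. deg G l \<in> deg_space k) \<and>
     (\<forall>v\<in>Obj G. deg G (idm G v) = (\<lambda>_. 0)) \<and>
     (\<forall>\<mu>\<in>Mor G. \<forall>\<nu>\<in>Mor G. src G \<mu> = rng G \<nu> \<longrightarrow>
        deg G (cmp G \<mu> \<nu>) = dadd (deg G \<mu>) (deg G \<nu>)) \<and>
     (\<forall>l\<in>Mor G. \<forall>m\<in>deg_space k. \<forall>n\<in>deg_space k. deg G l = dadd m n \<longrightarrow>
        (\<exists>!p. fst p \<in> Mor G \<and> snd p \<in> Mor G \<and> src G (fst p) = rng G (snd p) \<and>
              l = cmp G (fst p) (snd p) \<and> deg G (fst p) = m \<and> deg G (snd p) = n))"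

definition paths_from :: "('v, 'a, 'z) kgraph_scheme \<Rightarrow> 'v \<Rightarrow> (nat \<Rightarrow> nat) \<Rightarrow> 'a set" where
  "paths_from G v n = {l \<in> Mor G. rng G l = v \<and> deg G l = n}"

definition row_finite :: "nat \<Rightarrow> ('v, 'a, 'z) kgraph_scheme \<Rightarrow> bool" where
  "row_finite k G \<longleftrightarrow> (\<forall>v\<in>Obj G. \<forall>n\<in>deg_space k. finite (paths_from G v n))"

definition no_sources :: "nat \<Rightarrow> ('v, 'a, 'z) kgraph_scheme \<Rightarrow> bool" where
  "no_sources k G \<longleftrightarrow> (\<forall>v\<in>Obj G. \<forall>i<k. paths_from G v (unit_deg i) \<noteq> {})"

definition rfns_kgraph :: "nat \<Rightarrow> ('v, 'a, 'z) kgraph_scheme \<Rightarrow> bool" where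
  "rfns_kgraph k G \<longleftrightarrow> is_kgraph k G \<and> row_finite k G \<and> no_sources k G"

definition seg :: "('v, 'a, 'z) kgraph_scheme \<Rightarrow> 'a \<Rightarrow> (nat \<Rightarrow> nat) \<Rightarrow> (nat \<Rightarrow> nat) \<Rightarrow> 'a" where
  "seg G l m n = (THE \<nu>. \<nu> \<in> Mor G \<and> (\<exists>l1\<in>Mor G. \<exists>l2\<in>Mor G.
       src G l1 = rng G \<nu> \<and> src G \<nu> = rng G l2 \<and>
       l = cmp G (cmp G l1 \<nu>) l2 \<and> deg G l1 = m \<and> deg G \<nu> = dsub n m))"

definition no_local_periodicity :: "nat \<Rightarrow> ('v, 'a, 'z) kgraph_scheme \<Rightarrow> 'v \<Rightarrow> bool" where
  "no_local_periodicity k G v \<longleftrightarrow>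
     (\<forall>m\<in>deg_space k. \<forall>n\<in>deg_space k. m \<noteq> n \<longrightarrow>
       (\<exists>l\<in>Mor G. rng G l = v \<and> dle (djoin m n) (deg G l) \<and>
          seg G l m (dadd m (dsub (deg G l) (djoin m n))) \<noteq>
          seg G l n (dadd n (dsub (deg G l) (djoin m n)))))"

definition aperiodic :: "nat \<Rightarrow> ('v, 'a, 'z) kgraph_scheme \<Rightarrow> bool" where
  "aperiodic k G \<longleftrightarrow> (\<forall>v\<in>Obj G. no_local_periodicity k G v)"

definition hereditary :: "('v, 'a, 'z) kgraph_scheme \<Rightarrow> 'v set \<Rightarrow> bool" where
  "hereditary G H \<longleftrightarrow> (\<forall>l\<in>Mor G. rng G l \<in> H \<longrightarrow> src G l \<in> H)"

definition saturated :: "nat \<Rightarrow> ('v, 'a, 'z) kgraph_scheme \<Rightarrow> 'v set \<Rightarrow> bool" where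
  "saturated k G H \<longleftrightarrow>
     (\<forall>v\<in>Obj G. (\<exists>l\<in>Mor G. rng G l = v) \<and>
        (\<exists>i<k. src G ` paths_from G v (unit_deg i) \<subseteq> H) \<longrightarrow> v \<in> H)"

definition restrict_kg :: "('v, 'a) kgraph \<Rightarrow> 'v set \<Rightarrow> ('v, 'a) kgraph" where
  "restrict_kg G H = G\<lparr>Obj := Obj G - H, Mor := {l \<in> Mor G. src G l \<notin> H}\<rparr>"

definition strongly_aperiodic :: "nat \<Rightarrow> ('v, 'a) kgraph \<Rightarrow> bool" where
  "strongly_aperiodic k G \<longleftrightarrow> rfns_kgraph k G \<and>
     (\<forall>H. H \<subseteq> Obj G \<and> H \<noteq> Obj G \<and> hereditary G H \<and> saturated k G H \<longrightarrow>
        aperiodic k (restrict_kg G H))"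

definition kg_product :: "nat \<Rightarrow> ('v1, 'a1) kgraph \<Rightarrow> ('v2, 'a2) kgraph \<Rightarrow>
    ('v1 \<times> 'v2, 'a1 \<times> 'a2) kgraph" where
  "kg_product k1 G1 G2 =
    \<lparr> Obj = Obj G1 \<times> Obj G2,
      Mor = Mor G1 \<times> Mor G2,
      rng = (\<lambda>(a, b). (rng G1 a, rng G2 b)),
      src = (\<lambda>(a, b). (src G1 a, src G2 b)),
      cmp = (\<lambda>(a, b) (c, d). (cmp G1 a c, cmp G2 b d)),
      idm = (\<lambda>(v, w). (idm G1 v, idm G2 w)),
      deg = (\<lambda>(a, b) i. if i < k1 then deg G1 a i else deg G2 b (i - k1)) \<rparr>"

end

theory Submission
  imports Defs
begin

text \<open>Everything in the product splits componentwise: a degree of \<open>\<Lambda>\<^sub>1 \<times> \<Lambda>\<^sub>2\<close> is a pair of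
degrees, paths of degree \<open>(m\<^sub>1, m\<^sub>2)\<close> from \<open>(v, w)\<close> are pairs of paths, and segments of a pair of
paths are pairs of segments. Row-finiteness and the absence of sources therefore transfer in both
directions, the missing component being filled by an identity (this is where the vertex sets must
be nonempty).

A pair of paths distinguishes two degrees \<open>M \<noteq> N\<close> iff it is long enough in both components and
one component distinguishes the corresponding projections. Since \<open>M\<close> and \<open>N\<close> differ in one
projection, a distinguishing path in that factor, paired with an arbitrarily long path in the
other factor (which aperiodicity also provides), does the job.

Aperiodicity of \<open>\<Gamma>(\<Lambda> \<setminus> H)\<close> is aperiodicity of \<open>\<Lambda>\<close> relative to \<open>H\<close>. Saturated hereditary sets of
a factor give saturated hereditary cylinders in the product, and the slices of a saturated
hereditary set of the product are saturated hereditary in the factors, so the same argument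
applies relative to such sets.\<close>

section \<open>Degrees of a product\<close>

definition deg_pair :: "nat \<Rightarrow> (nat \<Rightarrow> nat) \<Rightarrow> (nat \<Rightarrow> nat) \<Rightarrow> nat \<Rightarrow> nat" where
  "deg_pair k1 m n = (\<lambda>i. if i < k1 then m i else n (i - k1))"

definition deg_fst :: "nat \<Rightarrow> (nat \<Rightarrow> nat) \<Rightarrow> nat \<Rightarrow> nat" where
  "deg_fst k1 d = (\<lambda>i. if i < k1 then d i else 0)"

definition deg_snd :: "nat \<Rightarrow> (nat \<Rightarrow> nat) \<Rightarrow> nat \<Rightarrow> nat" where
  "deg_snd k1 d = (\<lambda>i. d (i + k1))"

lemma zero_deg_space [simp]: "(\<lambda>_. 0) \<in> deg_space k"
  by (simp add: deg_space_def)

lemma dle_deg_space: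
  assumes "dle m n" "n \<in> deg_space k"
  shows "m \<in> deg_space k"
  unfolding deg_space_def
proof (intro CollectI allI impI)
  fix i assume "k \<le> i"
  then have "n i = 0" using assms(2) by (simp add: deg_space_def)
  then show "m i = 0" using assms(1) by (simp add: dle_def) (metis le_zero_eq)
qed

lemma dsub_deg_space: "n \<in> deg_space k \<Longrightarrow> dsub n m \<in> deg_space k"
  by (simp add: deg_space_def dsub_def)

lemma djoin_deg_space: "m \<in> deg_space k \<Longrightarrow> n \<in> deg_space k \<Longrightarrow> djoin m n \<in> deg_space k"
  by (simp add: deg_space_def djoin_def)

lemma dadd_dsub_cancel: "dle m n \<Longrightarrow> dadd m (dsub n m) = n"
  by (auto simp: dle_def dadd_def dsub_def fun_eq_iff)

lemma dadd_left_cancel: "dadd m n = dadd m n' \<longleftrightarrow> n = n'"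
  by (auto simp: dadd_def fun_eq_iff)

lemma dle_djoin_iff: "dle (djoin m n) d \<longleftrightarrow> dle m d \<and> dle n d"
  by (auto simp: dle_def djoin_def)

lemma dle_shifted:
  assumes "dle m j" "dle j d"
  shows "dle m (dadd m (dsub d j))" "dle (dadd m (dsub d j)) d"
proof -
  have mj: "m i \<le> j i" and jd: "j i \<le> d i" for i using assms by (simp_all add: dle_def)
  have "m i \<le> m i + (d i - j i) \<and> m i + (d i - j i) \<le> d i" for i
    using mj[of i] jd[of i] by linarith
  then show "dle m (dadd m (dsub d j))" "dle (dadd m (dsub d j)) d"
    unfolding dle_def dadd_def dsub_def by blast+
qed

lemma deg_pair_deg_space: "n \<in> deg_space k2 \<Longrightarrow> deg_pair k1 m n \<in> deg_space (k1 + k2)"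
  by (auto simp: deg_pair_def deg_space_def)

lemma deg_fst_deg_space [simp]: "deg_fst k1 d \<in> deg_space k1"
  by (simp add: deg_fst_def deg_space_def)

lemma deg_snd_deg_space: "d \<in> deg_space (k1 + k2) \<Longrightarrow> deg_snd k1 d \<in> deg_space k2"
  by (simp add: deg_snd_def deg_space_def)

lemma deg_pair_fst_snd [simp]: "deg_pair k1 (deg_fst k1 d) (deg_snd k1 d) = d"
  by (auto simp: deg_pair_def deg_fst_def deg_snd_def fun_eq_iff)

lemma deg_fst_pair [simp]: "m \<in> deg_space k1 \<Longrightarrow> deg_fst k1 (deg_pair k1 m n) = m"
  by (auto simp: deg_pair_def deg_fst_def deg_space_def fun_eq_iff)

lemma deg_snd_pair [simp]: "deg_snd k1 (deg_pair k1 m n) = n"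
  by (simp add: deg_pair_def deg_snd_def)

lemma deg_pair_eq_iff:
  "m \<in> deg_space k1 \<Longrightarrow> deg_pair k1 m n = d \<longleftrightarrow> m = deg_fst k1 d \<and> n = deg_snd k1 d"
  by auto

lemma deg_eq_iff_fst_snd: "m = n \<longleftrightarrow> deg_fst k1 m = deg_fst k1 n \<and> deg_snd k1 m = deg_snd k1 n"
  by (metis deg_pair_fst_snd)

lemma dle_iff_fst_snd:
  "dle m n \<longleftrightarrow> dle (deg_fst k1 m) (deg_fst k1 n) \<and> dle (deg_snd k1 m) (deg_snd k1 n)"
  unfolding dle_def deg_fst_def deg_snd_def
  by (metis (full_types) le_add_diff_inverse2 not_le order_refl)

lemma deg_fst_dadd [simp]: "deg_fst k1 (dadd m n) = dadd (deg_fst k1 m) (deg_fst k1 n)"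
  and deg_snd_dadd [simp]: "deg_snd k1 (dadd m n) = dadd (deg_snd k1 m) (deg_snd k1 n)"
  and deg_fst_dsub [simp]: "deg_fst k1 (dsub m n) = dsub (deg_fst k1 m) (deg_fst k1 n)"
  and deg_snd_dsub [simp]: "deg_snd k1 (dsub m n) = dsub (deg_snd k1 m) (deg_snd k1 n)"
  and deg_fst_djoin [simp]: "deg_fst k1 (djoin m n) = djoin (deg_fst k1 m) (deg_fst k1 n)"
  and deg_snd_djoin [simp]: "deg_snd k1 (djoin m n) = djoin (deg_snd k1 m) (deg_snd k1 n)"
  by (auto simp: deg_fst_def deg_snd_def dadd_def dsub_def djoin_def fun_eq_iff)

lemma deg_fst_unit: "deg_fst k1 (unit_deg i) = (if i < k1 then unit_deg i else (\<lambda>_. 0))"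
  and deg_snd_unit: "deg_snd k1 (unit_deg i) = (if i < k1 then (\<lambda>_. 0) else unit_deg (i - k1))"
  by (auto simp: deg_fst_def deg_snd_def unit_deg_def fun_eq_iff)

lemma deg_pair_zero [simp]: "deg_pair k1 (\<lambda>_. 0) (\<lambda>_. 0) = (\<lambda>_. 0)"
  by (simp add: deg_pair_def)

lemma deg_pair_dadd: "deg_pair k1 (dadd a b) (dadd c d) = dadd (deg_pair k1 a c) (deg_pair k1 b d)"
  by (auto simp: deg_pair_def dadd_def fun_eq_iff)

lemma kg_product_simps [simp]:
  "Obj (kg_product k1 G1 G2) = Obj G1 \<times> Obj G2"
  "Mor (kg_product k1 G1 G2) = Mor G1 \<times> Mor G2"
  "rng (kg_product k1 G1 G2) (a, b) = (rng G1 a, rng G2 b)"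
  "src (kg_product k1 G1 G2) (a, b) = (src G1 a, src G2 b)"
  "cmp (kg_product k1 G1 G2) (a, b) (c, d) = (cmp G1 a c, cmp G2 b d)"
  "idm (kg_product k1 G1 G2) (v, w) = (idm G1 v, idm G2 w)"
  "deg (kg_product k1 G1 G2) (a, b) = deg_pair k1 (deg G1 a) (deg G2 b)"
  by (simp_all add: kg_product_def deg_pair_def)

section \<open>Factorisations and segments in a k-graph\<close>

locale kgraph =
  fixes k :: nat and G :: "('v, 'a) kgraph"
  assumes is_kgraph: "is_kgraph k G"
begin

lemma countable_Obj: "countable (Obj G)"
  and countable_Mor: "countable (Mor G)"
  and rng_Obj: "l \<in> Mor G \<Longrightarrow> rng G l \<in> Obj G"
  and src_Obj: "l \<in> Mor G \<Longrightarrow> src G l \<in> Obj G"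
  and idm_Mor: "v \<in> Obj G \<Longrightarrow> idm G v \<in> Mor G"
  and rng_idm: "v \<in> Obj G \<Longrightarrow> rng G (idm G v) = v"
  and src_idm: "v \<in> Obj G \<Longrightarrow> src G (idm G v) = v"
  and cmp_Mor: "\<mu> \<in> Mor G \<Longrightarrow> \<nu> \<in> Mor G \<Longrightarrow> src G \<mu> = rng G \<nu> \<Longrightarrow> cmp G \<mu> \<nu> \<in> Mor G"
  and rng_cmp: "\<mu> \<in> Mor G \<Longrightarrow> \<nu> \<in> Mor G \<Longrightarrow> src G \<mu> = rng G \<nu> \<Longrightarrow> rng G (cmp G \<mu> \<nu>) = rng G \<mu>"
  and src_cmp: "\<mu> \<in> Mor G \<Longrightarrow> \<nu> \<in> Mor G \<Longrightarrow> src G \<mu> = rng G \<nu> \<Longrightarrow> src G (cmp G \<mu> \<nu>) = src G \<nu>"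
  and cmp_idm_left: "l \<in> Mor G \<Longrightarrow> cmp G (idm G (rng G l)) l = l"
  and cmp_idm_right: "l \<in> Mor G \<Longrightarrow> cmp G l (idm G (src G l)) = l"
  and cmp_assoc: "\<alpha> \<in> Mor G \<Longrightarrow> \<mu> \<in> Mor G \<Longrightarrow> \<nu> \<in> Mor G \<Longrightarrow> src G \<alpha> = rng G \<mu> \<Longrightarrow>
      src G \<mu> = rng G \<nu> \<Longrightarrow> cmp G (cmp G \<alpha> \<mu>) \<nu> = cmp G \<alpha> (cmp G \<mu> \<nu>)"
  and deg_deg_space [simp]: "l \<in> Mor G \<Longrightarrow> deg G l \<in> deg_space k"
  and deg_idm: "v \<in> Obj G \<Longrightarrow> deg G (idm G v) = (\<lambda>_. 0)"
  and deg_cmp: "\<mu> \<in> Mor G \<Longrightarrow> \<nu> \<in> Mor G \<Longrightarrow> src G \<mu> = rng G \<nu> \<Longrightarrow>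
      deg G (cmp G \<mu> \<nu>) = dadd (deg G \<mu>) (deg G \<nu>)"
  using is_kgraph unfolding is_kgraph_def by simp_all

lemma unique_factorization:
  "l \<in> Mor G \<Longrightarrow> m \<in> deg_space k \<Longrightarrow> n \<in> deg_space k \<Longrightarrow> deg G l = dadd m n \<Longrightarrow>
    \<exists>!p. fst p \<in> Mor G \<and> snd p \<in> Mor G \<and> src G (fst p) = rng G (snd p) \<and>
      l = cmp G (fst p) (snd p) \<and> deg G (fst p) = m \<and> deg G (snd p) = n"
  using is_kgraph unfolding is_kgraph_def by blast

lemma factorization_exists:
  assumes "l \<in> Mor G" "m \<in> deg_space k" "n \<in> deg_space k" "deg G l = dadd m n"
  obtains a b where "a \<in> Mor G" "b \<in> Mor G" "src G a = rng G b" "l = cmp G a b"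
    "deg G a = m" "deg G b = n"
  using unique_factorization[OF assms] by blast

lemma factorization_unique:
  assumes a: "a \<in> Mor G" "b \<in> Mor G" "src G a = rng G b"
    and a': "a' \<in> Mor G" "b' \<in> Mor G" "src G a' = rng G b'"
    and eq: "cmp G a b = cmp G a' b'" and deg_eq: "deg G a = deg G a'"
  shows "a = a' \<and> b = b'"
proof -
  let ?Q = "\<lambda>p. fst p \<in> Mor G \<and> snd p \<in> Mor G \<and> src G (fst p) = rng G (snd p) \<and>
    cmp G a b = cmp G (fst p) (snd p) \<and> deg G (fst p) = deg G a \<and> deg G (snd p) = deg G b"
  have "dadd (deg G a) (deg G b) = dadd (deg G a) (deg G b')"
    using deg_cmp[OF a] deg_cmp[OF a'] eq deg_eq by simp
  then have "?Q (a', b')" using a' eq deg_eq by (simp add: dadd_left_cancel)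
  moreover have "?Q (a, b)" using a by simp
  moreover have "\<exists>!p. ?Q p"
    using unique_factorization[OF cmp_Mor[OF a] deg_deg_space[OF a(1)] deg_deg_space[OF a(2)]
        deg_cmp[OF a]] .
  ultimately have "(a, b) = (a', b')"
    using Uniq_D[of ?Q "(a, b)" "(a', b')"] by (simp only: ex1_iff_ex_Uniq)
  then show ?thesis by simp
qed

lemma deg_zero_idm: "l \<in> Mor G \<Longrightarrow> deg G l = (\<lambda>_. 0) \<Longrightarrow> l = idm G (rng G l)"
  using factorization_unique[of "idm G (rng G l)" l l "idm G (src G l)"]
  by (simp add: idm_Mor rng_idm src_idm deg_idm rng_Obj src_Obj cmp_idm_left cmp_idm_right)

lemma paths_from_zero: "v \<in> Obj G \<Longrightarrow> paths_from G v (\<lambda>_. 0) = {idm G v}"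
  unfolding paths_from_def using deg_zero_idm by (auto simp: idm_Mor rng_idm deg_idm)

lemma saturated_iff:
  "saturated k G H \<longleftrightarrow>
    (\<forall>v\<in>Obj G. \<forall>i<k. src G ` paths_from G v (unit_deg i) \<subseteq> H \<longrightarrow> v \<in> H)"
  unfolding saturated_def using idm_Mor rng_idm by blast

lemma seg_eq:
  assumes fac: "l1 \<in> Mor G" "\<nu> \<in> Mor G" "l2 \<in> Mor G" "src G l1 = rng G \<nu>" "src G \<nu> = rng G l2"
    and deg: "deg G l1 = m" "deg G \<nu> = dsub n m"
  shows "seg G (cmp G (cmp G l1 \<nu>) l2) m n = \<nu>"
  unfolding seg_def
proof (rule the_equality)
  fix \<nu>'
  assume "\<nu>' \<in> Mor G \<and> (\<exists>l1'\<in>Mor G. \<exists>l2'\<in>Mor G. src G l1' = rng G \<nu>' \<and> src G \<nu>' = rng G l2' \<and>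
    cmp G (cmp G l1 \<nu>) l2 = cmp G (cmp G l1' \<nu>') l2' \<and> deg G l1' = m \<and> deg G \<nu>' = dsub n m)"
  then obtain l1' l2' where fac': "l1' \<in> Mor G" "\<nu>' \<in> Mor G" "l2' \<in> Mor G"
      "src G l1' = rng G \<nu>'" "src G \<nu>' = rng G l2'"
    and eq: "cmp G (cmp G l1 \<nu>) l2 = cmp G (cmp G l1' \<nu>') l2'"
    and deg': "deg G l1' = m" "deg G \<nu>' = dsub n m"
    by blast
  have "cmp G l1 \<nu> = cmp G l1' \<nu>'"
    using factorization_unique[of "cmp G l1 \<nu>" l2 "cmp G l1' \<nu>'" l2'] fac fac' eq deg deg'
    by (simp add: cmp_Mor src_cmp deg_cmp)
  then show "\<nu>' = \<nu>"
    using factorization_unique[of l1 \<nu> l1' \<nu>'] fac fac' deg deg' by simp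
qed (use fac deg in blast)

lemma seg_factorization:
  assumes l: "l \<in> Mor G" and mn: "dle m n" and nl: "dle n (deg G l)"
  obtains l1 l2 where "l1 \<in> Mor G" "seg G l m n \<in> Mor G" "l2 \<in> Mor G"
    "src G l1 = rng G (seg G l m n)" "src G (seg G l m n) = rng G l2"
    "l = cmp G (cmp G l1 (seg G l m n)) l2" "deg G l1 = m" "deg G (seg G l m n) = dsub n m"
proof -
  have n: "n \<in> deg_space k" and m: "m \<in> deg_space k"
    using dle_deg_space deg_deg_space[OF l] mn nl by blast+
  obtain x l2 where x: "x \<in> Mor G" "l2 \<in> Mor G" "src G x = rng G l2" "l = cmp G x l2" "deg G x = n"
    using factorization_exists[OF l n dsub_deg_space[OF deg_deg_space[OF l]]] nl
    by (metis dadd_dsub_cancel)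
  obtain l1 \<nu> where \<nu>: "l1 \<in> Mor G" "\<nu> \<in> Mor G" "src G l1 = rng G \<nu>" "x = cmp G l1 \<nu>"
      "deg G l1 = m" "deg G \<nu> = dsub n m"
    using factorization_exists[OF x(1) m dsub_deg_space[OF n]] x(5) mn
    by (metis dadd_dsub_cancel)
  have src\<nu>: "src G \<nu> = rng G l2" using x \<nu> by (simp add: src_cmp)
  moreover have "seg G l m n = \<nu>"
    using seg_eq[OF \<nu>(1,2) x(2) \<nu>(3) src\<nu> \<nu>(5,6)] x(4) \<nu>(4) by simp
  ultimately show ?thesis using that x \<nu> by blast
qed

end

section \<open>Relative aperiodicity\<close>

definition distinguishes :: "('v, 'a) kgraph \<Rightarrow> 'a \<Rightarrow> (nat \<Rightarrow> nat) \<Rightarrow> (nat \<Rightarrow> nat) \<Rightarrow> bool" where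
  "distinguishes G l m n \<longleftrightarrow> dle (djoin m n) (deg G l) \<and>
     seg G l m (dadd m (dsub (deg G l) (djoin m n))) \<noteq> seg G l n (dadd n (dsub (deg G l) (djoin m n)))"

text \<open>Aperiodicity of \<open>\<Gamma>(\<Lambda> \<setminus> H)\<close>, read inside \<open>\<Lambda>\<close>.\<close>

definition aperiodic_outside :: "nat \<Rightarrow> ('v, 'a) kgraph \<Rightarrow> 'v set \<Rightarrow> bool" where
  "aperiodic_outside k G H \<longleftrightarrow> (\<forall>v \<in> Obj G - H. \<forall>m\<in>deg_space k. \<forall>n\<in>deg_space k. m \<noteq> n \<longrightarrow>
     (\<exists>l\<in>Mor G. src G l \<notin> H \<and> rng G l = v \<and> distinguishes G l m n))"

lemma aperiodic_outsideD:
  assumes "aperiodic_outside k G H" "v \<in> Obj G" "v \<notin> H"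
    "m \<in> deg_space k" "n \<in> deg_space k" "m \<noteq> n"
  obtains l where "l \<in> Mor G" "src G l \<notin> H" "rng G l = v" "distinguishes G l m n"
  using assms unfolding aperiodic_outside_def by blast

lemma restrict_kg_simps [simp]:
  "Obj (restrict_kg G H) = Obj G - H" "Mor (restrict_kg G H) = {l \<in> Mor G. src G l \<notin> H}"
  "rng (restrict_kg G H) = rng G" "src (restrict_kg G H) = src G" "cmp (restrict_kg G H) = cmp G"
  "deg (restrict_kg G H) = deg G"
  by (simp_all add: restrict_kg_def)

lemma not_distinguishes_same: "\<not> distinguishes G l m m"
  by (simp add: distinguishes_def)

lemma no_local_periodicity_iff_distinguishes:
  "no_local_periodicity k G v \<longleftrightarrow> (\<forall>m\<in>deg_space k. \<forall>n\<in>deg_space k. m \<noteq> n \<longrightarrow>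
     (\<exists>l\<in>Mor G. rng G l = v \<and> distinguishes G l m n))"
  unfolding no_local_periodicity_def distinguishes_def ..

lemma aperiodic_iff_aperiodic_outside_empty: "aperiodic k G \<longleftrightarrow> aperiodic_outside k G {}"
  by (simp add: aperiodic_def aperiodic_outside_def no_local_periodicity_iff_distinguishes)

lemma aperiodic_outside_Obj: "aperiodic_outside k G (Obj G)"
  by (simp add: aperiodic_outside_def)

context kgraph
begin

lemma seg_restrict_kg:
  assumes H: "hereditary G H" and l: "l \<in> Mor G" "src G l \<notin> H"
  shows "seg (restrict_kg G H) l m n = seg G l m n"
proof -
  have outside: "src G l1 \<notin> H \<and> src G \<nu> \<notin> H \<and> src G l2 \<notin> H"
    if "l1 \<in> Mor G" "\<nu> \<in> Mor G" "l2 \<in> Mor G" "src G l1 = rng G \<nu>" "src G \<nu> = rng G l2"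
      "l = cmp G (cmp G l1 \<nu>) l2" for l1 \<nu> l2
  proof -
    have "src G l2 \<notin> H" using that l by (simp add: cmp_Mor src_cmp)
    then show ?thesis using H that unfolding hereditary_def by metis
  qed
  show ?thesis
    unfolding seg_def restrict_kg_simps
  proof (intro arg_cong[where f = The] ext iffI, goal_cases)
    case (1 \<nu>)
    then show ?case by blast
  next
    case (2 \<nu>)
    then obtain l1 l2 where f: "l1 \<in> Mor G" "\<nu> \<in> Mor G" "l2 \<in> Mor G" "src G l1 = rng G \<nu>"
        "src G \<nu> = rng G l2" "l = cmp G (cmp G l1 \<nu>) l2" "deg G l1 = m" "deg G \<nu> = dsub n m"
      by blast
    then show ?case using outside[OF f(1-6)] by blast
  qed
qed

lemma aperiodic_restrict_kg_iff:
  assumes H: "hereditary G H"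
  shows "aperiodic k (restrict_kg G H) \<longleftrightarrow> aperiodic_outside k G H"
proof -
  have "distinguishes (restrict_kg G H) l m n \<longleftrightarrow> distinguishes G l m n"
    if "l \<in> Mor G" "src G l \<notin> H" for l m n
    using seg_restrict_kg[OF H that] by (simp add: distinguishes_def)
  then have "(\<exists>l\<in>Mor (restrict_kg G H). rng (restrict_kg G H) l = v \<and>
      distinguishes (restrict_kg G H) l m n) \<longleftrightarrow>
    (\<exists>l\<in>Mor G. src G l \<notin> H \<and> rng G l = v \<and> distinguishes G l m n)" for v m n
    by auto
  then show ?thesis
    unfolding aperiodic_def aperiodic_outside_def no_local_periodicity_iff_distinguishes
    by simp
qed

lemma strongly_aperiodic_iff:
  "strongly_aperiodic k G \<longleftrightarrow> rfns_kgraph k G \<and>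
     (\<forall>H\<subseteq>Obj G. hereditary G H \<longrightarrow> saturated k G H \<longrightarrow> aperiodic_outside k G H)"
proof -
  have "(H \<subseteq> Obj G \<and> H \<noteq> Obj G \<and> hereditary G H \<and> saturated k G H \<longrightarrow>
      aperiodic k (restrict_kg G H)) \<longleftrightarrow>
    (H \<subseteq> Obj G \<longrightarrow> hereditary G H \<longrightarrow> saturated k G H \<longrightarrow> aperiodic_outside k G H)" for H
    by (cases "hereditary G H") (auto simp: aperiodic_restrict_kg_iff aperiodic_outside_Obj)
  then show ?thesis unfolding strongly_aperiodic_def by blast
qed

lemma aperiodic_outside_long_path:
  assumes A: "aperiodic_outside k G H" and v: "v \<in> Obj G" "v \<notin> H" and d: "d \<in> deg_space k"
  obtains l where "l \<in> Mor G" "src G l \<notin> H" "rng G l = v" "dle d (deg G l)"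
proof (cases "k = 0")
  case True
  then have "d = (\<lambda>_. 0)" using d by (auto simp: deg_space_def)
  then show ?thesis
    using that[of "idm G v"] v by (simp add: idm_Mor rng_idm src_idm deg_idm dle_def)
next
  case False
  let ?n = "dadd d (unit_deg 0)"
  have n: "?n \<in> deg_space k" and ne: "d \<noteq> ?n"
    using d False by (auto simp: deg_space_def dadd_def unit_deg_def fun_eq_iff)
  obtain l where "l \<in> Mor G" "src G l \<notin> H" "rng G l = v" "distinguishes G l d ?n"
    by (rule aperiodic_outsideD[OF A v d n ne])
  then show ?thesis using that by (simp add: distinguishes_def dle_djoin_iff)
qed

end

section \<open>The cartesian product\<close>

locale kgraph_product = G1: kgraph k1 G1 + G2: kgraph k2 G2
  for k1 :: nat and G1 :: "('v1, 'a1) kgraph" and k2 :: nat and G2 :: "('v2, 'a2) kgraph"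
begin

abbreviation P :: "('v1 \<times> 'v2, 'a1 \<times> 'a2) kgraph" where
  "P \<equiv> kg_product k1 G1 G2"

lemmas deg_product_eq_iff = deg_pair_eq_iff[OF G1.deg_deg_space]

lemma product_factorization:
  assumes l: "l \<in> Mor P" and m: "m \<in> deg_space (k1 + k2)" and n: "n \<in> deg_space (k1 + k2)"
    and deg: "deg P l = dadd m n"
  shows "\<exists>!p. fst p \<in> Mor P \<and> snd p \<in> Mor P \<and> src P (fst p) = rng P (snd p) \<and>
    l = cmp P (fst p) (snd p) \<and> deg P (fst p) = m \<and> deg P (snd p) = n"
proof (rule ex_ex1I)
  obtain a b where ab: "l = (a, b)" "a \<in> Mor G1" "b \<in> Mor G2" using l by auto
  have da: "deg G1 a = dadd (deg_fst k1 m) (deg_fst k1 n)"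
    and db: "deg G2 b = dadd (deg_snd k1 m) (deg_snd k1 n)"
    using deg deg_product_eq_iff[OF ab(2)] ab(1) by auto
  obtain a1 a2 where "a1 \<in> Mor G1" "a2 \<in> Mor G1" "src G1 a1 = rng G1 a2" "a = cmp G1 a1 a2"
      "deg G1 a1 = deg_fst k1 m" "deg G1 a2 = deg_fst k1 n"
    by (rule G1.factorization_exists[OF ab(2) deg_fst_deg_space deg_fst_deg_space da])
  moreover obtain b1 b2 where "b1 \<in> Mor G2" "b2 \<in> Mor G2" "src G2 b1 = rng G2 b2"
      "b = cmp G2 b1 b2" "deg G2 b1 = deg_snd k1 m" "deg G2 b2 = deg_snd k1 n"
    by (rule G2.factorization_exists[OF ab(3) deg_snd_deg_space[OF m] deg_snd_deg_space[OF n] db])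
  ultimately show "\<exists>p. fst p \<in> Mor P \<and> snd p \<in> Mor P \<and> src P (fst p) = rng P (snd p) \<and>
      l = cmp P (fst p) (snd p) \<and> deg P (fst p) = m \<and> deg P (snd p) = n"
    using ab by (intro exI[of _ "((a1, b1), (a2, b2))"]) simp
next
  fix p q
  assume p: "fst p \<in> Mor P \<and> snd p \<in> Mor P \<and> src P (fst p) = rng P (snd p) \<and>
      l = cmp P (fst p) (snd p) \<and> deg P (fst p) = m \<and> deg P (snd p) = n"
    and q: "fst q \<in> Mor P \<and> snd q \<in> Mor P \<and> src P (fst q) = rng P (snd q) \<and>
      l = cmp P (fst q) (snd q) \<and> deg P (fst q) = m \<and> deg P (snd q) = n"
  obtain x1 y1 x2 y2 x1' y1' x2' y2' where
    pq: "p = ((x1, y1), (x2, y2))" "q = ((x1', y1'), (x2', y2'))"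
    by (metis prod.collapse)
  have "deg G1 x1 = deg G1 x1'" "deg G2 y1 = deg G2 y1'"
    using p q unfolding pq by (auto simp: deg_product_eq_iff)
  then show "p = q"
    using p q G1.factorization_unique[of x1 x2 x1' x2'] G2.factorization_unique[of y1 y2 y1' y2']
    unfolding pq by auto
qed

lemma product_is_kgraph: "is_kgraph (k1 + k2) P"
  unfolding is_kgraph_def
  using product_factorization
  by (auto simp: G1.countable_Obj G2.countable_Obj G1.countable_Mor G2.countable_Mor
      G1.cmp_assoc G2.cmp_assoc G1.rng_Obj G1.src_Obj G2.rng_Obj G2.src_Obj G1.idm_Mor G2.idm_Mor
      G1.rng_idm G1.src_idm G2.rng_idm G2.src_idm G1.cmp_Mor G2.cmp_Mor G1.rng_cmp G2.rng_cmp
      G1.src_cmp G2.src_cmp G1.cmp_idm_left G2.cmp_idm_left G1.cmp_idm_right G2.cmp_idm_right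
      G2.deg_deg_space deg_pair_deg_space G1.deg_idm G2.deg_idm G1.deg_cmp G2.deg_cmp deg_pair_dadd)

sublocale P: kgraph "k1 + k2" P
  by unfold_locales (rule product_is_kgraph)

lemma paths_from_product:
  "paths_from P (v, w) d = paths_from G1 v (deg_fst k1 d) \<times> paths_from G2 w (deg_snd k1 d)"
  by (auto simp: paths_from_def deg_product_eq_iff)

lemma paths_from_product_unit:
  assumes "v \<in> Obj G1" "w \<in> Obj G2"
  shows "paths_from P (v, w) (unit_deg i) = (if i < k1
    then paths_from G1 v (unit_deg i) \<times> {idm G2 w}
    else {idm G1 v} \<times> paths_from G2 w (unit_deg (i - k1)))"
  using assms by (simp add: paths_from_product deg_fst_unit deg_snd_unit
      G1.paths_from_zero G2.paths_from_zero)

lemma src_product_image: "src P ` (A \<times> B) = src G1 ` A \<times> src G2 ` B"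
  by (simp add: kg_product_def image_paired_Times)

lemma row_finite_product_iff:
  assumes "Obj G1 \<noteq> {}" "Obj G2 \<noteq> {}"
  shows "row_finite (k1 + k2) P \<longleftrightarrow> row_finite k1 G1 \<and> row_finite k2 G2"
proof safe
  assume rf: "row_finite (k1 + k2) P"
  show "row_finite k1 G1" unfolding row_finite_def
  proof (intro ballI)
    fix v d assume "v \<in> Obj G1" "d \<in> deg_space k1"
    moreover obtain w where "w \<in> Obj G2" using assms by blast
    moreover have "deg_pair k1 d (\<lambda>_. 0) \<in> deg_space (k1 + k2)"
      by (simp add: deg_pair_deg_space)
    ultimately have "finite (paths_from P (v, w) (deg_pair k1 d (\<lambda>_. 0)))"
      using rf unfolding row_finite_def by simp
    then have "finite (paths_from G1 v d \<times> {idm G2 w})"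
      using \<open>d \<in> deg_space k1\<close> \<open>w \<in> Obj G2\<close>
      by (simp add: paths_from_product G2.paths_from_zero)
    then show "finite (paths_from G1 v d)" using finite_cartesian_productD1 by blast
  qed
  show "row_finite k2 G2" unfolding row_finite_def
  proof (intro ballI)
    fix w d assume "w \<in> Obj G2" "d \<in> deg_space k2"
    moreover obtain v where "v \<in> Obj G1" using assms by blast
    moreover have "deg_pair k1 (\<lambda>_. 0) d \<in> deg_space (k1 + k2)"
      using \<open>d \<in> deg_space k2\<close> by (simp add: deg_pair_deg_space)
    ultimately have "finite (paths_from P (v, w) (deg_pair k1 (\<lambda>_. 0) d))"
      using rf unfolding row_finite_def by simp
    then have "finite ({idm G1 v} \<times> paths_from G2 w d)"
      using \<open>v \<in> Obj G1\<close> by (simp add: paths_from_product G1.paths_from_zero)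
    then show "finite (paths_from G2 w d)" using finite_cartesian_productD2 by blast
  qed
next
  assume "row_finite k1 G1" "row_finite k2 G2"
  then show "row_finite (k1 + k2) P"
    by (auto simp: row_finite_def paths_from_product deg_snd_deg_space)
qed

lemma no_sources_product_iff:
  assumes "Obj G1 \<noteq> {}" "Obj G2 \<noteq> {}"
  shows "no_sources (k1 + k2) P \<longleftrightarrow> no_sources k1 G1 \<and> no_sources k2 G2"
proof -
  have unit: "paths_from P (v, w) (unit_deg i) \<noteq> {} \<longleftrightarrow> (if i < k1
      then paths_from G1 v (unit_deg i) \<noteq> {} else paths_from G2 w (unit_deg (i - k1)) \<noteq> {})"
    if "v \<in> Obj G1" "w \<in> Obj G2" for v w i
    using paths_from_product_unit[OF that] by simp
  show ?thesis
  proof safe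
    assume N: "no_sources (k1 + k2) P"
    show "no_sources k1 G1" unfolding no_sources_def
    proof (intro ballI allI impI)
      fix v i assume v: "v \<in> Obj G1" and i: "i < k1"
      obtain w where w: "w \<in> Obj G2" using assms by blast
      then have "paths_from P (v, w) (unit_deg i) \<noteq> {}"
        using N v i unfolding no_sources_def by simp
      then show "paths_from G1 v (unit_deg i) \<noteq> {}" using unit[OF v w] i by simp
    qed
    show "no_sources k2 G2" unfolding no_sources_def
    proof (intro ballI allI impI)
      fix w i assume w: "w \<in> Obj G2" and i: "i < k2"
      obtain v where v: "v \<in> Obj G1" using assms by blast
      then have "paths_from P (v, w) (unit_deg (k1 + i)) \<noteq> {}"
        using N w i unfolding no_sources_def by simp
      then show "paths_from G2 w (unit_deg i) \<noteq> {}" using unit[OF v w] by simp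
    qed
  next
    assume N1: "no_sources k1 G1" and N2: "no_sources k2 G2"
    show "no_sources (k1 + k2) P" unfolding no_sources_def
    proof (intro ballI allI impI)
      fix vw i assume "vw \<in> Obj P" and i: "i < k1 + k2"
      then obtain v w where vw: "vw = (v, w)" "v \<in> Obj G1" "w \<in> Obj G2" by auto
      have "i - k1 < k2" if "\<not> i < k1" using i that by simp
      then show "paths_from P vw (unit_deg i) \<noteq> {}"
        using unit[OF vw(2,3)] N1 N2 vw unfolding no_sources_def by simp
    qed
  qed
qed

lemma rfns_product_iff:
  assumes "Obj G1 \<noteq> {}" "Obj G2 \<noteq> {}"
  shows "rfns_kgraph (k1 + k2) P \<longleftrightarrow> rfns_kgraph k1 G1 \<and> rfns_kgraph k2 G2"
  unfolding rfns_kgraph_def row_finite_product_iff[OF assms] no_sources_product_iff[OF assms]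
  using product_is_kgraph G1.is_kgraph G2.is_kgraph by blast

lemma seg_product:
  assumes a: "a \<in> Mor G1" and b: "b \<in> Mor G2" and mn: "dle m n" and n: "dle n (deg P (a, b))"
  shows "seg P (a, b) m n =
    (seg G1 a (deg_fst k1 m) (deg_fst k1 n), seg G2 b (deg_snd k1 m) (deg_snd k1 n))"
proof -
  let ?s1 = "seg G1 a (deg_fst k1 m) (deg_fst k1 n)" and ?s2 = "seg G2 b (deg_snd k1 m) (deg_snd k1 n)"
  have h1: "dle (deg_fst k1 m) (deg_fst k1 n)" "dle (deg_fst k1 n) (deg G1 a)"
    and h2: "dle (deg_snd k1 m) (deg_snd k1 n)" "dle (deg_snd k1 n) (deg G2 b)"
    using mn n dle_iff_fst_snd[of m n k1] dle_iff_fst_snd[of n "deg P (a, b)" k1]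
    by (simp_all add: a)
  obtain a1 a2 where
    A: "a1 \<in> Mor G1" "?s1 \<in> Mor G1" "a2 \<in> Mor G1" "src G1 a1 = rng G1 ?s1"
      "src G1 ?s1 = rng G1 a2" "a = cmp G1 (cmp G1 a1 ?s1) a2"
      "deg G1 a1 = deg_fst k1 m" "deg G1 ?s1 = dsub (deg_fst k1 n) (deg_fst k1 m)"
    by (rule G1.seg_factorization[OF a h1])
  obtain b1 b2 where
    B: "b1 \<in> Mor G2" "?s2 \<in> Mor G2" "b2 \<in> Mor G2" "src G2 b1 = rng G2 ?s2"
      "src G2 ?s2 = rng G2 b2" "b = cmp G2 (cmp G2 b1 ?s2) b2"
      "deg G2 b1 = deg_snd k1 m" "deg G2 ?s2 = dsub (deg_snd k1 n) (deg_snd k1 m)"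
    by (rule G2.seg_factorization[OF b h2])
  have "deg_pair k1 (dsub (deg_fst k1 n) (deg_fst k1 m)) (dsub (deg_snd k1 n) (deg_snd k1 m)) =
      dsub n m"
    by (metis deg_fst_dsub deg_snd_dsub deg_pair_fst_snd)
  then show ?thesis
    using P.seg_eq[of "(a1, b1)" "(?s1, ?s2)" "(a2, b2)" m n] A B
    by (simp add: deg_product_eq_iff)
qed

lemma distinguishes_product:
  assumes a: "a \<in> Mor G1" and b: "b \<in> Mor G2"
  shows "distinguishes P (a, b) M N \<longleftrightarrow>
    dle (djoin (deg_fst k1 M) (deg_fst k1 N)) (deg G1 a) \<and>
    dle (djoin (deg_snd k1 M) (deg_snd k1 N)) (deg G2 b) \<and>
    (distinguishes G1 a (deg_fst k1 M) (deg_fst k1 N) \<or>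
     distinguishes G2 b (deg_snd k1 M) (deg_snd k1 N))"
proof -
  let ?D = "deg P (a, b)" and ?J = "djoin M N"
  have D: "deg_fst k1 ?D = deg G1 a" "deg_snd k1 ?D = deg G2 b"
    by (simp_all add: G1.deg_deg_space[OF a])
  have J: "dle ?J ?D \<longleftrightarrow> dle (djoin (deg_fst k1 M) (deg_fst k1 N)) (deg G1 a) \<and>
      dle (djoin (deg_snd k1 M) (deg_snd k1 N)) (deg G2 b)"
    using dle_iff_fst_snd[of ?J ?D k1] D by simp
  have "seg P (a, b) X (dadd X (dsub ?D ?J)) =
      (seg G1 a (deg_fst k1 X) (dadd (deg_fst k1 X) (dsub (deg G1 a) (deg_fst k1 ?J))),
       seg G2 b (deg_snd k1 X) (dadd (deg_snd k1 X) (dsub (deg G2 b) (deg_snd k1 ?J))))"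
    if "dle ?J ?D" "dle X ?J" for X
    using seg_product[OF a b dle_shifted[OF that(2,1)]] D by simp
  moreover have "dle M ?J" "dle N ?J" by (simp_all add: dle_def djoin_def)
  ultimately show ?thesis
    using J by (auto simp: distinguishes_def)
qed

lemma aperiodic_outside_product:
  assumes A1: "\<And>w. w \<in> Obj G2 \<Longrightarrow> aperiodic_outside k1 G1 {a \<in> Obj G1. (a, w) \<in> H}"
    and A2: "\<And>v. v \<in> Obj G1 \<Longrightarrow> aperiodic_outside k2 G2 {b \<in> Obj G2. (v, b) \<in> H}"
  shows "aperiodic_outside (k1 + k2) P H"
  unfolding aperiodic_outside_def
proof (intro ballI impI)
  fix vw M N
  assume vw: "vw \<in> Obj P - H" and M: "M \<in> deg_space (k1 + k2)" and N: "N \<in> deg_space (k1 + k2)"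
    and "M \<noteq> N"
  obtain v w where v: "vw = (v, w)" "v \<in> Obj G1" "w \<in> Obj G2" "(v, w) \<notin> H" using vw by auto
  have M2: "deg_snd k1 M \<in> deg_space k2" and N2: "deg_snd k1 N \<in> deg_space k2"
    using M N by (simp_all add: deg_snd_deg_space)
  have witness: "\<exists>l\<in>Mor P. src P l \<notin> H \<and> rng P l = vw \<and> distinguishes P l M N"
    if "a \<in> Mor G1" "b \<in> Mor G2" "(src G1 a, src G2 b) \<notin> H" "rng G1 a = v" "rng G2 b = w"
      "dle (djoin (deg_fst k1 M) (deg_fst k1 N)) (deg G1 a)"
      "dle (djoin (deg_snd k1 M) (deg_snd k1 N)) (deg G2 b)"
      "distinguishes G1 a (deg_fst k1 M) (deg_fst k1 N) \<or>
       distinguishes G2 b (deg_snd k1 M) (deg_snd k1 N)" for a b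
    using that v(1) by (intro bexI[of _ "(a, b)"]) (simp_all add: distinguishes_product)
  consider "deg_fst k1 M \<noteq> deg_fst k1 N" | "deg_snd k1 M \<noteq> deg_snd k1 N"
    using \<open>M \<noteq> N\<close> deg_eq_iff_fst_snd by blast
  then show "\<exists>l\<in>Mor P. src P l \<notin> H \<and> rng P l = vw \<and> distinguishes P l M N"
  proof cases
    case 1
    have "v \<notin> {a \<in> Obj G1. (a, w) \<in> H}" using v by simp
    then obtain a where a: "a \<in> Mor G1" "src G1 a \<notin> {a \<in> Obj G1. (a, w) \<in> H}" "rng G1 a = v"
        "distinguishes G1 a (deg_fst k1 M) (deg_fst k1 N)"
      by (rule aperiodic_outsideD[OF A1[OF v(3)] v(2) _ deg_fst_deg_space deg_fst_deg_space 1])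
    then have "w \<notin> {b \<in> Obj G2. (src G1 a, b) \<in> H}" by (simp add: G1.src_Obj)
    then obtain b where b: "b \<in> Mor G2" "src G2 b \<notin> {b \<in> Obj G2. (src G1 a, b) \<in> H}"
        "rng G2 b = w" "dle (djoin (deg_snd k1 M) (deg_snd k1 N)) (deg G2 b)"
      by (rule G2.aperiodic_outside_long_path[OF A2[OF G1.src_Obj[OF a(1)]] v(3) _
          djoin_deg_space[OF M2 N2]])
    show ?thesis
      using witness[OF a(1) b(1) _ a(3) b(3) _ b(4)] a(4) b(2) G2.src_Obj[OF b(1)]
      by (simp add: distinguishes_def)
  next
    case 2
    have "w \<notin> {b \<in> Obj G2. (v, b) \<in> H}" using v by simp
    then obtain b where b: "b \<in> Mor G2" "src G2 b \<notin> {b \<in> Obj G2. (v, b) \<in> H}" "rng G2 b = w"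
        "distinguishes G2 b (deg_snd k1 M) (deg_snd k1 N)"
      by (rule aperiodic_outsideD[OF A2[OF v(2)] v(3) _ M2 N2 2])
    then have "v \<notin> {a \<in> Obj G1. (a, src G2 b) \<in> H}" by (simp add: G2.src_Obj)
    then obtain a where a: "a \<in> Mor G1" "src G1 a \<notin> {a \<in> Obj G1. (a, src G2 b) \<in> H}"
        "rng G1 a = v" "dle (djoin (deg_fst k1 M) (deg_fst k1 N)) (deg G1 a)"
      by (rule G1.aperiodic_outside_long_path[OF A1[OF G2.src_Obj[OF b(1)]] v(2) _
          djoin_deg_space[OF deg_fst_deg_space deg_fst_deg_space]])
    show ?thesis
      using witness[OF a(1) b(1) _ a(3) b(3) a(4)] b(4) a(2) G1.src_Obj[OF a(1)]
      by (simp add: distinguishes_def)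
  qed
qed

lemma aperiodic_outside_cylinder_fst:
  assumes "Obj G2 \<noteq> {}" and A: "aperiodic_outside (k1 + k2) P (H1 \<times> Obj G2)"
  shows "aperiodic_outside k1 G1 H1"
  unfolding aperiodic_outside_def
proof (intro ballI impI)
  fix v m n
  assume v: "v \<in> Obj G1 - H1" and m: "m \<in> deg_space k1" and n: "n \<in> deg_space k1" and "m \<noteq> n"
  obtain w where w: "w \<in> Obj G2" using assms(1) by blast
  let ?M = "deg_pair k1 m (\<lambda>_. 0)" and ?N = "deg_pair k1 n (\<lambda>_. 0)"
  have MN: "?M \<in> deg_space (k1 + k2)" "?N \<in> deg_space (k1 + k2)" "?M \<noteq> ?N"
    using \<open>m \<noteq> n\<close> m n by (auto simp: deg_pair_deg_space dest: arg_cong[of _ _ "deg_fst k1"])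
  have vw: "(v, w) \<in> Obj P" "(v, w) \<notin> H1 \<times> Obj G2" using v w by auto
  obtain l where "l \<in> Mor P" "src P l \<notin> H1 \<times> Obj G2" "rng P l = (v, w)"
      "distinguishes P l ?M ?N"
    by (rule aperiodic_outsideD[OF A vw MN])
  then obtain a b where "a \<in> Mor G1" "b \<in> Mor G2" "src G1 a \<notin> H1" "rng G1 a = v"
      "distinguishes P (a, b) ?M ?N"
    using G2.src_Obj by auto
  then show "\<exists>l\<in>Mor G1. src G1 l \<notin> H1 \<and> rng G1 l = v \<and> distinguishes G1 l m n"
    using m n by (auto simp: distinguishes_product not_distinguishes_same)
qed

lemma aperiodic_outside_cylinder_snd:
  assumes "Obj G1 \<noteq> {}" and A: "aperiodic_outside (k1 + k2) P (Obj G1 \<times> H2)"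
  shows "aperiodic_outside k2 G2 H2"
  unfolding aperiodic_outside_def
proof (intro ballI impI)
  fix w m n
  assume w: "w \<in> Obj G2 - H2" and m: "m \<in> deg_space k2" and n: "n \<in> deg_space k2" and "m \<noteq> n"
  obtain v where v: "v \<in> Obj G1" using assms(1) by blast
  let ?M = "deg_pair k1 (\<lambda>_. 0) m" and ?N = "deg_pair k1 (\<lambda>_. 0) n"
  have MN: "?M \<in> deg_space (k1 + k2)" "?N \<in> deg_space (k1 + k2)" "?M \<noteq> ?N"
    using \<open>m \<noteq> n\<close> m n by (auto simp: deg_pair_deg_space dest: arg_cong[of _ _ "deg_snd k1"])
  have vw: "(v, w) \<in> Obj P" "(v, w) \<notin> Obj G1 \<times> H2" using v w by auto
  obtain l where "l \<in> Mor P" "src P l \<notin> Obj G1 \<times> H2" "rng P l = (v, w)"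
      "distinguishes P l ?M ?N"
    by (rule aperiodic_outsideD[OF A vw MN])
  then obtain a b where "a \<in> Mor G1" "b \<in> Mor G2" "src G2 b \<notin> H2" "rng G2 b = w"
      "distinguishes P (a, b) ?M ?N"
    using G1.src_Obj by auto
  then show "\<exists>l\<in>Mor G2. src G2 l \<notin> H2 \<and> rng G2 l = w \<and> distinguishes G2 l m n"
    by (auto simp: distinguishes_product not_distinguishes_same)
qed

lemma aperiodic_product_iff:
  assumes "Obj G1 \<noteq> {}" "Obj G2 \<noteq> {}"
  shows "aperiodic (k1 + k2) P \<longleftrightarrow> aperiodic k1 G1 \<and> aperiodic k2 G2"
  using aperiodic_outside_cylinder_fst[OF assms(2), of "{}"]
    aperiodic_outside_cylinder_snd[OF assms(1), of "{}"]
    aperiodic_outside_product[of "{}"]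
  by (auto simp: aperiodic_iff_aperiodic_outside_empty)

lemma hereditary_cylinder_fst: "hereditary G1 H1 \<Longrightarrow> hereditary P (H1 \<times> Obj G2)"
  and hereditary_cylinder_snd: "hereditary G2 H2 \<Longrightarrow> hereditary P (Obj G1 \<times> H2)"
  by (auto simp: hereditary_def G1.src_Obj G2.src_Obj)

lemma hereditary_slice_fst:
  assumes H: "hereditary P H" and w: "w \<in> Obj G2"
  shows "hereditary G1 {a \<in> Obj G1. (a, w) \<in> H}"
  unfolding hereditary_def
proof (intro ballI impI)
  fix l assume l: "l \<in> Mor G1" "rng G1 l \<in> {a \<in> Obj G1. (a, w) \<in> H}"
  then have "(l, idm G2 w) \<in> Mor P" "rng P (l, idm G2 w) \<in> H"
    using w by (simp_all add: G2.idm_Mor G2.rng_idm)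
  then have "src P (l, idm G2 w) \<in> H" using H unfolding hereditary_def by blast
  then show "src G1 l \<in> {a \<in> Obj G1. (a, w) \<in> H}"
    using l w by (simp add: G1.src_Obj G2.src_idm)
qed

lemma hereditary_slice_snd:
  assumes H: "hereditary P H" and v: "v \<in> Obj G1"
  shows "hereditary G2 {b \<in> Obj G2. (v, b) \<in> H}"
  unfolding hereditary_def
proof (intro ballI impI)
  fix l assume l: "l \<in> Mor G2" "rng G2 l \<in> {b \<in> Obj G2. (v, b) \<in> H}"
  then have "(idm G1 v, l) \<in> Mor P" "rng P (idm G1 v, l) \<in> H"
    using v by (simp_all add: G1.idm_Mor G1.rng_idm)
  then have "src P (idm G1 v, l) \<in> H" using H unfolding hereditary_def by blast
  then show "src G2 l \<in> {b \<in> Obj G2. (v, b) \<in> H}"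
    using l v by (simp add: G2.src_Obj G1.src_idm)
qed

lemma saturated_cylinder_fst:
  assumes sat: "saturated k1 G1 H1" and ns: "no_sources k2 G2"
  shows "saturated (k1 + k2) P (H1 \<times> Obj G2)"
  unfolding P.saturated_iff
proof (intro ballI allI impI)
  fix vw i
  assume "vw \<in> Obj P" and i: "i < k1 + k2"
    and sub: "src P ` paths_from P vw (unit_deg i) \<subseteq> H1 \<times> Obj G2"
  then obtain v w where v: "vw = (v, w)" "v \<in> Obj G1" "w \<in> Obj G2" by auto
  have "v \<in> H1"
  proof (cases "i < k1")
    case True
    then have "src G1 ` paths_from G1 v (unit_deg i) \<subseteq> H1"
      using sub v by (auto simp: paths_from_product_unit src_product_image)
    then show ?thesis using sat v(2) True unfolding G1.saturated_iff by blast
  next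
    case False
    then have "i - k1 < k2" using i by simp
    then have "paths_from G2 w (unit_deg (i - k1)) \<noteq> {}"
      using ns v(3) unfolding no_sources_def by blast
    then show ?thesis
      using sub v False by (auto simp: paths_from_product_unit src_product_image G1.src_idm)
  qed
  then show "vw \<in> H1 \<times> Obj G2" using v by simp
qed

lemma saturated_cylinder_snd:
  assumes sat: "saturated k2 G2 H2" and ns: "no_sources k1 G1"
  shows "saturated (k1 + k2) P (Obj G1 \<times> H2)"
  unfolding P.saturated_iff
proof (intro ballI allI impI)
  fix vw i
  assume "vw \<in> Obj P" and i: "i < k1 + k2"
    and sub: "src P ` paths_from P vw (unit_deg i) \<subseteq> Obj G1 \<times> H2"
  then obtain v w where v: "vw = (v, w)" "v \<in> Obj G1" "w \<in> Obj G2" by auto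
  have "w \<in> H2"
  proof (cases "i < k1")
    case True
    then have "paths_from G1 v (unit_deg i) \<noteq> {}"
      using ns v(2) unfolding no_sources_def by blast
    then show ?thesis
      using sub v True by (auto simp: paths_from_product_unit src_product_image G2.src_idm)
  next
    case False
    then have "src G2 ` paths_from G2 w (unit_deg (i - k1)) \<subseteq> H2"
      using sub v by (auto simp: paths_from_product_unit src_product_image)
    moreover have "i - k1 < k2" using False i by simp
    ultimately show ?thesis using sat v(3) unfolding G2.saturated_iff by blast
  qed
  then show "vw \<in> Obj G1 \<times> H2" using v by simp
qed

lemma saturated_slice_fst:
  assumes sat: "saturated (k1 + k2) P H" and w: "w \<in> Obj G2"
  shows "saturated k1 G1 {a \<in> Obj G1. (a, w) \<in> H}"
  unfolding G1.saturated_iff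
proof (intro ballI allI impI)
  fix v i
  assume v: "v \<in> Obj G1" and i: "i < k1"
    and sub: "src G1 ` paths_from G1 v (unit_deg i) \<subseteq> {a \<in> Obj G1. (a, w) \<in> H}"
  then have "src P ` paths_from P (v, w) (unit_deg i) \<subseteq> H"
    using w by (auto simp: paths_from_product_unit src_product_image G2.src_idm)
  moreover have "(v, w) \<in> Obj P" "i < k1 + k2" using v w i by auto
  ultimately have "(v, w) \<in> H" using sat unfolding P.saturated_iff by blast
  then show "v \<in> {a \<in> Obj G1. (a, w) \<in> H}" using v by simp
qed

lemma saturated_slice_snd:
  assumes sat: "saturated (k1 + k2) P H" and v: "v \<in> Obj G1"
  shows "saturated k2 G2 {b \<in> Obj G2. (v, b) \<in> H}"
  unfolding G2.saturated_iff
proof (intro ballI allI impI)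
  fix w i
  assume w: "w \<in> Obj G2" and i: "i < k2"
    and sub: "src G2 ` paths_from G2 w (unit_deg i) \<subseteq> {b \<in> Obj G2. (v, b) \<in> H}"
  then have "src P ` paths_from P (v, w) (unit_deg (k1 + i)) \<subseteq> H"
    using v by (auto simp: paths_from_product_unit src_product_image G1.src_idm)
  moreover have "(v, w) \<in> Obj P" "k1 + i < k1 + k2" using v w i by auto
  ultimately have "(v, w) \<in> H" using sat unfolding P.saturated_iff by blast
  then show "w \<in> {b \<in> Obj G2. (v, b) \<in> H}" using w by simp
qed

lemma strongly_aperiodic_product_iff:
  assumes ne: "Obj G1 \<noteq> {}" "Obj G2 \<noteq> {}"
  shows "strongly_aperiodic (k1 + k2) P \<longleftrightarrow> strongly_aperiodic k1 G1 \<and> strongly_aperiodic k2 G2"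
proof -
  let ?SA = "\<lambda>k G. \<forall>H\<subseteq>Obj G. hereditary G H \<longrightarrow> saturated k G H \<longrightarrow> aperiodic_outside k G H"
  have fst: "aperiodic_outside k1 G1 H1"
    if SA: "?SA (k1 + k2) P" and "rfns_kgraph k2 G2"
      and H1: "H1 \<subseteq> Obj G1" "hereditary G1 H1" "saturated k1 G1 H1" for H1
  proof -
    have "saturated (k1 + k2) P (H1 \<times> Obj G2)"
      using saturated_cylinder_fst[OF H1(3)] \<open>rfns_kgraph k2 G2\<close> by (simp add: rfns_kgraph_def)
    moreover have "H1 \<times> Obj G2 \<subseteq> Obj P" using H1(1) by auto
    ultimately have "aperiodic_outside (k1 + k2) P (H1 \<times> Obj G2)"
      using SA hereditary_cylinder_fst[OF H1(2)] by blast
    then show ?thesis by (rule aperiodic_outside_cylinder_fst[OF ne(2)])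
  qed
  have snd: "aperiodic_outside k2 G2 H2"
    if SA: "?SA (k1 + k2) P" and "rfns_kgraph k1 G1"
      and H2: "H2 \<subseteq> Obj G2" "hereditary G2 H2" "saturated k2 G2 H2" for H2
  proof -
    have "saturated (k1 + k2) P (Obj G1 \<times> H2)"
      using saturated_cylinder_snd[OF H2(3)] \<open>rfns_kgraph k1 G1\<close> by (simp add: rfns_kgraph_def)
    moreover have "Obj G1 \<times> H2 \<subseteq> Obj P" using H2(1) by auto
    ultimately have "aperiodic_outside (k1 + k2) P (Obj G1 \<times> H2)"
      using SA hereditary_cylinder_snd[OF H2(2)] by blast
    then show ?thesis by (rule aperiodic_outside_cylinder_snd[OF ne(1)])
  qed
  have prod: "aperiodic_outside (k1 + k2) P H"
    if SA1: "?SA k1 G1" and SA2: "?SA k2 G2" and H: "hereditary P H" "saturated (k1 + k2) P H"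
    for H
  proof (rule aperiodic_outside_product)
    fix w assume "w \<in> Obj G2"
    then show "aperiodic_outside k1 G1 {a \<in> Obj G1. (a, w) \<in> H}"
      using SA1[rule_format, OF Collect_restrict] hereditary_slice_fst[OF H(1)]
        saturated_slice_fst[OF H(2)] by simp
  next
    fix v assume "v \<in> Obj G1"
    then show "aperiodic_outside k2 G2 {b \<in> Obj G2. (v, b) \<in> H}"
      using SA2[rule_format, OF Collect_restrict] hereditary_slice_snd[OF H(1)]
        saturated_slice_snd[OF H(2)] by simp
  qed
  show ?thesis
    unfolding G1.strongly_aperiodic_iff G2.strongly_aperiodic_iff P.strongly_aperiodic_iff
      rfns_product_iff[OF ne]
  proof (intro iffI)
    assume A: "(rfns_kgraph k1 G1 \<and> rfns_kgraph k2 G2) \<and> ?SA (k1 + k2) P"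
    then have r: "rfns_kgraph k1 G1" "rfns_kgraph k2 G2" and sa: "?SA (k1 + k2) P" by simp_all
    have sa1: "?SA k1 G1" using fst[OF sa r(2)] by blast
    have sa2: "?SA k2 G2" using snd[OF sa r(1)] by blast
    show "(rfns_kgraph k1 G1 \<and> ?SA k1 G1) \<and> rfns_kgraph k2 G2 \<and> ?SA k2 G2"
      by (intro conjI r sa1 sa2)
  next
    assume A: "(rfns_kgraph k1 G1 \<and> ?SA k1 G1) \<and> rfns_kgraph k2 G2 \<and> ?SA k2 G2"
    then have r: "rfns_kgraph k1 G1" "rfns_kgraph k2 G2"
      and sa1: "?SA k1 G1" and sa2: "?SA k2 G2" by simp_all
    have sa: "?SA (k1 + k2) P" using prod[OF sa1 sa2] by blast
    show "(rfns_kgraph k1 G1 \<and> rfns_kgraph k2 G2) \<and> ?SA (k1 + k2) P"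
      by (intro conjI r sa)
  qed
qed

end

theorem theorem5p3:
  fixes G1 :: "('v1, 'a1) kgraph" and G2 :: "('v2, 'a2) kgraph" and k1 k2 :: nat
  assumes "is_kgraph k1 G1" and "is_kgraph k2 G2"
    and "Obj G1 \<noteq> {}" and "Obj G2 \<noteq> {}"
  shows "(rfns_kgraph (k1 + k2) (kg_product k1 G1 G2) \<longleftrightarrow>
            rfns_kgraph k1 G1 \<and> rfns_kgraph k2 G2)
       \<and> (aperiodic (k1 + k2) (kg_product k1 G1 G2) \<longleftrightarrow>
            aperiodic k1 G1 \<and> aperiodic k2 G2)
       \<and> (strongly_aperiodic (k1 + k2) (kg_product k1 G1 G2) \<longleftrightarrow>
            strongly_aperiodic k1 G1 \<and> strongly_aperiodic k2 G2)"
proof -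
  interpret kgraph_product k1 G1 k2 G2
    using assms(1,2) by (simp add: kgraph_product_def kgraph_def)
  show ?thesis
    using rfns_product_iff aperiodic_product_iff strongly_aperiodic_product_iff assms(3,4)
    by blast
qed

end
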